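(* Let $X$ be a Fréchet space, let $\Gamma:[0,1]\to ck(X)$ be Pettis integrable in $ck(X)$, and let $G:[0,1]\to ck(X)$ be scalarly measurable with $G(t)\subseteq\Gamma(t)$ for all $t\in[0,1]$. Then $G$ is Pettis integrable in $ck(X)$.
   Context: $X$ is a Fréchet space, $X^*$ its dual, $ck(X)$ the nonempty compact convex subsets of $X$, $\sigma(x^*,C)=\sup_{x\in C}\langle x^*,x\rangle$. Scalarly measurable: $t\mapsto\sigma(x^*,G(t))$ measurable for each $x^*\in X^*$. Pettis integrable in $ck(X)$: $\sigma(x^*,\Gamma(\cdot))$ Lebesgue integrable for each $x^*$, and for every Lebesgue measurable $E\subseteq[0,1]$ there is $x_E\in ck(X)$ with $\sigma(x^*,x_E)=\int_E\sigma(x^*,\Gamma(t))dt$ for all $x^*\in X^*$. *)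

theory Defs
  imports "HOL-Analysis.Analysis" "HOL-Probability.Probability"
begin

text \<open>A Frechet space is modelled as a real vector space (a type) together with a
countable separating family of seminorms p 0, p 1, ..., which is complete for the
canonical translation-invariant metric generated by the seminorms. Its topology is
the induced metric topology (equivalently, the locally convex topology of the seminorms).\<close>

definition seminorm :: "('a::real_vector \<Rightarrow> real) \<Rightarrow> bool" where
  "seminorm q \<longleftrightarrow> (\<forall>x y. q (x + y) \<le> q x + q y) \<and> (\<forall>c x. q (c *\<^sub>R x) = \<bar>c\<bar> * q x)"

definition fr_dist :: "(nat \<Rightarrow> 'a::real_vector \<Rightarrow> real) \<Rightarrow> 'a \<Rightarrow> 'a \<Rightarrow> real" where
  "fr_dist p x y = (\<Sum>n. (1/2)^n * min 1 (p n (x - y)))"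

definition fr_top :: "(nat \<Rightarrow> 'a::real_vector \<Rightarrow> real) \<Rightarrow> 'a topology" where
  "fr_top p = Metric_space.mtopology UNIV (fr_dist p)"

definition frechet :: "(nat \<Rightarrow> 'a::real_vector \<Rightarrow> real) \<Rightarrow> bool" where
  "frechet p \<longleftrightarrow> (\<forall>n. seminorm (p n)) \<and> (\<forall>x. (\<forall>n. p n x = 0) \<longrightarrow> x = 0)
     \<and> Metric_space UNIV (fr_dist p) \<and> Metric_space.mcomplete UNIV (fr_dist p)"

definition fr_dual :: "(nat \<Rightarrow> 'a::real_vector \<Rightarrow> real) \<Rightarrow> ('a \<Rightarrow> real) set" where
  "fr_dual p = {f. linear f \<and> continuous_map (fr_top p) euclideanreal f}"

definition ck :: "(nat \<Rightarrow> 'a::real_vector \<Rightarrow> real) \<Rightarrow> 'a set set" where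
  "ck p = {C. C \<noteq> {} \<and> compactin (fr_top p) C \<and> convex C}"

definition supp_fun :: "('a \<Rightarrow> real) \<Rightarrow> 'a set \<Rightarrow> real" where
  "supp_fun f C = (SUP x\<in>C. f x)"

definition scalarly_measurable ::
  "(nat \<Rightarrow> 'a::real_vector \<Rightarrow> real) \<Rightarrow> (real \<Rightarrow> 'a set) \<Rightarrow> bool" where
  "scalarly_measurable p G \<longleftrightarrow>
     (\<forall>f\<in>fr_dual p. (\<lambda>t. supp_fun f (G t)) \<in> borel_measurable (restrict_space lebesgue {0..1}))"

definition pettis_ck ::
  "(nat \<Rightarrow> 'a::real_vector \<Rightarrow> real) \<Rightarrow> (real \<Rightarrow> 'a set) \<Rightarrow> bool" where
  "pettis_ck p \<Gamma> \<longleftrightarrow>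
     (\<forall>t\<in>{0..1}. \<Gamma> t \<in> ck p) \<and>
     (\<forall>f\<in>fr_dual p. set_integrable lebesgue {0..1} (\<lambda>t. supp_fun f (\<Gamma> t))) \<and>
     (\<forall>E. E \<in> sets lebesgue \<and> E \<subseteq> {0..1} \<longrightarrow>
        (\<exists>C\<in>ck p. \<forall>f\<in>fr_dual p. supp_fun f C = (LINT t:E|lebesgue. supp_fun f (\<Gamma> t))))"

end

theory Submission
  imports Defs
begin

text \<open>For measurable \<open>E \<subseteq> [0,1]\<close> the functional \<open>\<phi>(x\<^sup>*) = \<integral>\<^sub>E \<sigma>(x\<^sup>*, G t) dt\<close> is
  sublinear on \<open>X\<^sup>*\<close> and, since \<open>G t \<subseteq> \<Gamma> t\<close>, dominated by \<open>\<sigma>(x\<^sup>*, K)\<close> where K is the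
  Pettis integral of \<open>\<Gamma>\<close> over E; integrability of \<open>\<sigma>(x\<^sup>*, G)\<close> comes from the sandwich
  \<open>-\<sigma>(-x\<^sup>*, \<Gamma>) \<le> \<sigma>(x\<^sup>*, G) \<le> \<sigma>(x\<^sup>*, \<Gamma>)\<close>. A sublinear functional dominated by the support
  function of a compact convex K is the support function of the compact convex set
  \<open>C = {x \<in> K. x\<^sup>* x \<le> \<phi>(x\<^sup>*) for all x\<^sup>*}\<close>. The only point is that each \<open>x\<^sup>*\<close> attains
  \<open>\<phi>(x\<^sup>*)\<close> on C: otherwise compactness of K yields finitely many affine inequalities that
  no point of K satisfies, a minimax argument (pairwise, by separation in \<open>\<real>\<^sup>2\<close>) merges them
  into one implied affine inequality violated on all of K, and this contradicts
  \<open>\<phi> \<le> \<sigma>(\<cdot>, K)\<close>.\<close>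

lemma positive_convex_combination_of_coordinates:
  fixes T :: "(real \<times> real) set"
  assumes "compact T" "convex T" and pos: "\<forall>(a, b)\<in>T. 0 < a \<or> 0 < b"
  shows "\<exists>t\<in>{0..1}. \<forall>(a, b)\<in>T. 0 < t * a + (1 - t) * b"
proof (cases "T = {}")
  case False
  define Q :: "(real \<times> real) set" where "Q = {z. fst z \<le> 0 \<and> snd z \<le> 0}"
  have "convex Q"
    unfolding Q_def convex_def by (auto intro: add_nonpos_nonpos mult_nonneg_nonpos)
  moreover have "closed Q"
    unfolding Q_def by (intro closed_Collect_conj closed_Collect_le continuous_intros)
  moreover have "Q \<inter> T = {}" using pos by (auto simp: Q_def)
  ultimately obtain n b where below: "\<forall>z\<in>Q. inner n z < b" and above: "\<forall>z\<in>T. b < inner n z"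
    using separating_hyperplane_closed_compact assms(1,2) False by metis
  obtain n1 n2 where n: "n = (n1, n2)" by fastforce
  have "b > 0" using below[rule_format, of 0] by (simp add: Q_def)
  have "n1 \<ge> 0"
  proof (rule ccontr)
    assume "\<not> n1 \<ge> 0"
    then show False
      using below[rule_format, of "(b / n1, 0)"] \<open>b > 0\<close> by (simp add: Q_def n divide_pos_neg less_imp_le)
  qed
  moreover have "n2 \<ge> 0"
  proof (rule ccontr)
    assume "\<not> n2 \<ge> 0"
    then show False
      using below[rule_format, of "(0, b / n2)"] \<open>b > 0\<close> by (simp add: Q_def n divide_pos_neg less_imp_le)
  qed
  moreover have "n1 + n2 \<noteq> 0"
  proof
    assume "n1 + n2 = 0"
    with calculation have "n = 0" by (simp add: n zero_prod_def)
    then show False using False above \<open>b > 0\<close> by auto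
  qed
  ultimately have s: "n1 + n2 > 0" by simp
  have weight: "1 - n1 / (n1 + n2) = n2 / (n1 + n2)"
    using s by (simp add: field_simps)
  show ?thesis
  proof (intro bexI ballI)
    fix z assume "z \<in> T"
    then have "0 < n1 * fst z + n2 * snd z"
      using above \<open>b > 0\<close> by (fastforce simp: n inner_prod_def)
    then have "0 < (n1 * fst z + n2 * snd z) / (n1 + n2)"
      using s by simp
    also have "\<dots> = n1 / (n1 + n2) * fst z + (1 - n1 / (n1 + n2)) * snd z"
      by (simp add: weight add_divide_distrib)
    finally show "case z of (a, b) \<Rightarrow> 0 < n1 / (n1 + n2) * a + (1 - n1 / (n1 + n2)) * b"
      by (simp add: case_prod_beta)
  qed (use s \<open>n1 \<ge> 0\<close> \<open>n2 \<ge> 0\<close> in auto)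
qed auto

lemma affine_image_pair_convex:
  fixes g h :: "'a::real_vector \<Rightarrow> real"
  assumes "convex K" "linear g" "linear h"
  shows "convex ((\<lambda>x. (g x + c, h x + d)) ` K)"
  unfolding convex_def
proof (clarsimp)
  fix x y and u v :: real
  assume "x \<in> K" "y \<in> K" "0 \<le> u" "0 \<le> v" "u + v = 1"
  have combine: "u * (f x + e) + v * (f y + e) = f (u *\<^sub>R x + v *\<^sub>R y) + e"
    if "linear f" for f :: "'a \<Rightarrow> real" and e
  proof -
    have "u * (f x + e) + v * (f y + e) = u * f x + v * f y + (u + v) * e"
      by (simp add: algebra_simps)
    then show ?thesis using \<open>u + v = 1\<close> that by (simp add: linear_add linear_scale)
  qed
  have "u *\<^sub>R x + v *\<^sub>R y \<in> K"
    using \<open>convex K\<close> \<open>x \<in> K\<close> \<open>y \<in> K\<close> \<open>0 \<le> u\<close> \<open>0 \<le> v\<close> \<open>u + v = 1\<close>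
    by (simp add: convex_def)
  then show "(u * (g x + c) + v * (g y + c), u * (h x + d) + v * (h y + d))
      \<in> (\<lambda>x. (g x + c, h x + d)) ` K"
    unfolding combine[OF assms(2)] combine[OF assms(3)] by (rule imageI)
qed

lemma positive_convex_combination_of_affine:
  fixes g h :: "'a::real_vector \<Rightarrow> real"
  assumes "compactin X K" "convex K"
    and "linear g" "continuous_map X euclideanreal g"
    and "linear h" "continuous_map X euclideanreal h"
    and pos: "\<forall>x\<in>K. 0 < g x + c \<or> 0 < h x + d"
  shows "\<exists>t\<in>{0..1}. \<forall>x\<in>K. 0 < t * (g x + c) + (1 - t) * (h x + d)"
proof -
  let ?T = "(\<lambda>x. (g x + c, h x + d)) ` K"
  have "continuous_map X (prod_topology euclideanreal euclideanreal) (\<lambda>x. (g x + c, h x + d))"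
    by (rule continuous_map_pairedI; rule continuous_map_add) (simp_all add: assms(4,6))
  then have "compact ?T"
    using image_compactin[OF assms(1)] by (metis compactin_euclidean_iff prod_topology_euclidean)
  moreover have "convex ?T" using affine_image_pair_convex assms(2,3,5) by blast
  ultimately show ?thesis
    using positive_convex_combination_of_coordinates[of ?T] pos by auto
qed

lemma compactin_sublevel:
  assumes "compactin X K" "continuous_map X euclideanreal f"
  shows "compactin X {x\<in>K. f x \<le> a}"
proof -
  have "{x\<in>K. f x \<le> a} = K \<inter> {x \<in> topspace X. f x \<in> {..a}}"
    using compactin_subset_topspace[OF assms(1)] by auto
  moreover have "closedin X {x \<in> topspace X. f x \<in> {..a}}"
    using closedin_continuous_map_preimage[OF assms(2), of "{..a}"] by simp
  ultimately show ?thesis using compact_Int_closedin[OF assms(1)] by simp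
qed

lemma convex_sublevel_linear:
  fixes g :: "'a::real_vector \<Rightarrow> real"
  assumes "convex K" "linear g"
  shows "convex {x\<in>K. g x \<le> a}"
proof -
  have "{x\<in>K. g x \<le> a} = K \<inter> g -` {..a}" by auto
  moreover have "convex (g -` {..a})" by (rule convex_linear_vimage[OF assms(2) convex_real_interval(2)])
  ultimately show ?thesis using convex_Int[OF assms(1)] by simp
qed

lemma positive_member_of_convex_affine_family:
  fixes P :: "('a::real_vector \<Rightarrow> real) set"
  assumes affine: "\<And>\<phi>. \<phi> \<in> P \<Longrightarrow>
      \<exists>g c. linear g \<and> continuous_map X euclideanreal g \<and> \<phi> = (\<lambda>x. g x + c)"
    and convex: "\<And>\<phi> \<psi> t. \<phi> \<in> P \<Longrightarrow> \<psi> \<in> P \<Longrightarrow> t \<in> {0..1} \<Longrightarrow>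
      (\<lambda>x. t * \<phi> x + (1 - t) * \<psi> x) \<in> P"
    and "finite S" "S \<noteq> {}" "S \<subseteq> P" "compactin X K" "convex K"
    and "\<forall>x\<in>K. \<exists>\<phi>\<in>S. 0 < \<phi> x"
  shows "\<exists>\<phi>\<in>P. \<forall>x\<in>K. 0 < \<phi> x"
  using assms(3-)
proof (induction S arbitrary: K rule: finite_ne_induct)
  case (singleton \<phi>)
  then show ?case by auto
next
  case (insert \<phi> S)
  then have "\<phi> \<in> P" by simp
  then obtain g c where g: "linear g" "continuous_map X euclideanreal g" and \<phi>: "\<phi> = (\<lambda>x. g x + c)"
    using affine by blast
  define K' where "K' = {x\<in>K. g x \<le> - c}"
  have "compactin X K'"
    unfolding K'_def using compactin_sublevel insert.prems(2) g(2) by blast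
  moreover have "convex K'"
    unfolding K'_def using convex_sublevel_linear insert.prems(3) g(1) by blast
  moreover have "\<forall>x\<in>K'. \<exists>\<phi>\<in>S. 0 < \<phi> x"
    using insert.prems(4) unfolding K'_def \<phi> by fastforce
  ultimately obtain \<psi> where "\<psi> \<in> P" and \<psi>: "\<forall>x\<in>K'. 0 < \<psi> x"
    using insert.IH insert.prems(1) by blast
  then obtain h d where h: "linear h" "continuous_map X euclideanreal h" and \<psi>_eq: "\<psi> = (\<lambda>x. h x + d)"
    using affine by blast
  have cover: "\<forall>x\<in>K. 0 < g x + c \<or> 0 < h x + d"
    using \<psi> unfolding K'_def \<psi>_eq by force
  obtain t where t: "t \<in> {0..1}" and pos: "\<forall>x\<in>K. 0 < t * \<phi> x + (1 - t) * \<psi> x"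
    using positive_convex_combination_of_affine[OF insert.prems(2,3) g h cover]
    unfolding \<phi> \<psi>_eq by blast
  show ?case
    using pos by (intro bexI[OF _ convex[OF \<open>\<phi> \<in> P\<close> \<open>\<psi> \<in> P\<close> t]]) simp
qed

lemma compactin_finite_positive_subcover:
  assumes "compactin X K" "\<And>\<phi>. \<phi> \<in> \<Phi> \<Longrightarrow> continuous_map X euclideanreal \<phi>"
    and "\<forall>x\<in>K. \<exists>\<phi>\<in>\<Phi>. 0 < \<phi> x"
  shows "\<exists>S\<subseteq>\<Phi>. finite S \<and> (\<forall>x\<in>K. \<exists>\<phi>\<in>S. 0 < \<phi> x)"
proof -
  define U where "U \<phi> = {x \<in> topspace X. \<phi> x \<in> {0::real<..}}" for \<phi>
  have "openin X (U \<phi>)" if "\<phi> \<in> \<Phi>" for \<phi>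
    unfolding U_def using openin_continuous_map_preimage[OF assms(2)[OF that], of "{0<..}"] by simp
  moreover have "K \<subseteq> \<Union> (U ` \<Phi>)"
    using assms(3) compactin_subset_topspace[OF assms(1)] by (fastforce simp: U_def)
  ultimately obtain \<F> where "finite \<F>" "\<F> \<subseteq> U ` \<Phi>" "K \<subseteq> \<Union> \<F>"
    using assms(1) unfolding compactin_def by (metis (no_types, lifting) imageE)
  then obtain S where S: "S \<subseteq> \<Phi>" "finite S" and cover: "K \<subseteq> \<Union> (U ` S)"
    by (metis finite_subset_image)
  have "\<forall>x\<in>K. \<exists>\<phi>\<in>S. 0 < \<phi> x"
    using cover unfolding U_def by auto
  with S show ?thesis by blast
qed

lemma fr_dual_linear: "g \<in> fr_dual p \<Longrightarrow> linear g"
  by (simp add: fr_dual_def)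

lemma fr_dual_continuous: "g \<in> fr_dual p \<Longrightarrow> continuous_map (fr_top p) euclideanreal g"
  by (simp add: fr_dual_def)

lemma fr_dual_add: "f \<in> fr_dual p \<Longrightarrow> g \<in> fr_dual p \<Longrightarrow> (\<lambda>x. f x + g x) \<in> fr_dual p"
  unfolding fr_dual_def by (auto intro: linear_compose_add continuous_map_add)

lemma fr_dual_scale:
  assumes "f \<in> fr_dual p"
  shows "(\<lambda>x. c * f x) \<in> fr_dual p"
proof -
  have "linear (\<lambda>x. c * f x)"
    using fr_dual_linear[OF assms] by (intro linearI) (auto simp: linear_add linear_scale algebra_simps)
  then show ?thesis
    using fr_dual_continuous[OF assms] continuous_map_real_mult_left by (auto simp: fr_dual_def)
qed

lemma fr_dual_uminus: "f \<in> fr_dual p \<Longrightarrow> (\<lambda>x. - f x) \<in> fr_dual p"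
  using fr_dual_scale[of f p "-1"] by simp

lemma fr_dual_zero: "(\<lambda>x. 0) \<in> fr_dual p"
  unfolding fr_dual_def by (auto simp: linear_zero)

lemma ck_nonempty: "C \<in> ck p \<Longrightarrow> C \<noteq> {}"
  by (simp add: ck_def)

lemma supp_fun_attained:
  assumes "C \<in> ck p" "g \<in> fr_dual p"
  shows "\<exists>x\<in>C. supp_fun g C = g x \<and> (\<forall>y\<in>C. g y \<le> g x)"
proof -
  have "compactin euclideanreal (g ` C)"
    using image_compactin[OF _ fr_dual_continuous[OF assms(2)]] assms(1) by (auto simp: ck_def)
  then obtain x where x: "x \<in> C" "\<forall>y\<in>C. g y \<le> g x"
    using compact_attains_sup[of "g ` C"] ck_nonempty[OF assms(1)] by auto
  then have "supp_fun g C = g x"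
    unfolding supp_fun_def by (intro cSup_eq_maximum) auto
  then show ?thesis using x by blast
qed

lemma supp_fun_upper: "C \<in> ck p \<Longrightarrow> g \<in> fr_dual p \<Longrightarrow> x \<in> C \<Longrightarrow> g x \<le> supp_fun g C"
  using supp_fun_attained by fastforce

lemma supp_fun_mono:
  assumes "C \<in> ck p" "D \<in> ck p" "C \<subseteq> D" "g \<in> fr_dual p"
  shows "supp_fun g C \<le> supp_fun g D"
  using supp_fun_attained[OF assms(1,4)] supp_fun_upper[OF assms(2,4)] assms(3) by fastforce

lemma supp_fun_uminus_le:
  assumes "C \<in> ck p" "D \<in> ck p" "C \<subseteq> D" "g \<in> fr_dual p"
  shows "- supp_fun (\<lambda>x. - g x) D \<le> supp_fun g C"
proof -
  obtain x where "x \<in> C" using ck_nonempty[OF assms(1)] by blast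
  then show ?thesis
    using supp_fun_upper[OF assms(2) fr_dual_uminus[OF assms(4)]] supp_fun_upper[OF assms(1,4)] assms(3)
    by force
qed

lemma supp_fun_add_le:
  assumes "C \<in> ck p" "g \<in> fr_dual p" "h \<in> fr_dual p"
  shows "supp_fun (\<lambda>x. g x + h x) C \<le> supp_fun g C + supp_fun h C"
proof -
  obtain x where "x \<in> C" "supp_fun (\<lambda>x. g x + h x) C = g x + h x"
    using supp_fun_attained[OF assms(1) fr_dual_add[OF assms(2,3)]] by auto
  then show ?thesis using supp_fun_upper[OF assms(1)] assms(2,3) by (simp add: add_mono)
qed

lemma supp_fun_scale:
  assumes "C \<in> ck p" "g \<in> fr_dual p" "0 \<le> c"
  shows "supp_fun (\<lambda>x. c * g x) C = c * supp_fun g C"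
proof -
  obtain x where x: "x \<in> C" "supp_fun g C = g x" "\<forall>y\<in>C. g y \<le> g x"
    using supp_fun_attained[OF assms(1,2)] by blast
  then have "supp_fun (\<lambda>x. c * g x) C = c * g x"
    unfolding supp_fun_def using assms(3) by (intro cSup_eq_maximum) (auto intro: mult_left_mono)
  then show ?thesis using x(2) by simp
qed

locale dominated_sublinear =
  fixes p :: "nat \<Rightarrow> 'a::real_vector \<Rightarrow> real"
    and K :: "'a set"
    and \<phi> :: "('a \<Rightarrow> real) \<Rightarrow> real"
  assumes K_ck: "K \<in> ck p"
    and subadditive: "\<And>g h. g \<in> fr_dual p \<Longrightarrow> h \<in> fr_dual p \<Longrightarrow> \<phi> (\<lambda>x. g x + h x) \<le> \<phi> g + \<phi> h"
    and homogeneous: "\<And>g c. g \<in> fr_dual p \<Longrightarrow> 0 \<le> c \<Longrightarrow> \<phi> (\<lambda>x. c * g x) = c * \<phi> g"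
    and below_supp_fun: "\<And>g. g \<in> fr_dual p \<Longrightarrow> \<phi> g \<le> supp_fun g K"
begin

lemma K_compact: "compactin (fr_top p) K" and K_convex: "convex K"
  using K_ck by (simp_all add: ck_def)

lemma convex_combination_le:
  assumes "g \<in> fr_dual p" "h \<in> fr_dual p" "t \<in> {0..1}"
  shows "\<phi> (\<lambda>x. t * g x + (1 - t) * h x) \<le> t * \<phi> g + (1 - t) * \<phi> h"
proof -
  have "0 \<le> t" "0 \<le> 1 - t" using assms(3) by auto
  have "\<phi> (\<lambda>x. t * g x + (1 - t) * h x) \<le> \<phi> (\<lambda>x. t * g x) + \<phi> (\<lambda>x. (1 - t) * h x)"
    by (rule subadditive[OF fr_dual_scale[OF assms(1)] fr_dual_scale[OF assms(2)]])
  then show ?thesis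
    using homogeneous[OF assms(1) \<open>0 \<le> t\<close>] homogeneous[OF assms(2) \<open>0 \<le> 1 - t\<close>] by simp
qed

text \<open>The affine inequalities \<open>\<psi> x \<le> 0\<close> implied by \<open>\<phi> f \<le> f x\<close> together with
  \<open>g x \<le> \<phi> g\<close> for all g: add \<open>\<mu>\<close> times the first to the instance
  \<open>g x + \<mu> * f x \<le> \<phi> (\<lambda>x. g x + \<mu> * f x)\<close> of the second.\<close>
definition implied_bounds :: "('a \<Rightarrow> real) \<Rightarrow> ('a \<Rightarrow> real) set" where
  "implied_bounds f = {\<lambda>x. g x + c | g c. g \<in> fr_dual p \<and>
     (\<exists>\<mu>\<ge>0. c \<le> \<mu> * \<phi> f - \<phi> (\<lambda>x. g x + \<mu> * f x))}"

lemma implied_boundsI: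
  "g \<in> fr_dual p \<Longrightarrow> 0 \<le> \<mu> \<Longrightarrow> c \<le> \<mu> * \<phi> f - \<phi> (\<lambda>x. g x + \<mu> * f x) \<Longrightarrow>
     (\<lambda>x. g x + c) \<in> implied_bounds f"
  unfolding implied_bounds_def by blast

lemma implied_bounds_affine:
  "\<psi> \<in> implied_bounds f \<Longrightarrow>
     \<exists>g c. linear g \<and> continuous_map (fr_top p) euclideanreal g \<and> \<psi> = (\<lambda>x. g x + c)"
  unfolding implied_bounds_def using fr_dual_linear fr_dual_continuous by blast

lemma implied_bounds_convex:
  assumes f: "f \<in> fr_dual p" and "\<psi> \<in> implied_bounds f" "\<omega> \<in> implied_bounds f" and t: "t \<in> {0..1}"
  shows "(\<lambda>x. t * \<psi> x + (1 - t) * \<omega> x) \<in> implied_bounds f"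
proof -
  obtain g c \<mu> where g: "g \<in> fr_dual p" "0 \<le> \<mu>" "c \<le> \<mu> * \<phi> f - \<phi> (\<lambda>x. g x + \<mu> * f x)"
    and \<psi>: "\<psi> = (\<lambda>x. g x + c)"
    using assms(2) unfolding implied_bounds_def by blast
  obtain h d \<nu> where h: "h \<in> fr_dual p" "0 \<le> \<nu>" "d \<le> \<nu> * \<phi> f - \<phi> (\<lambda>x. h x + \<nu> * f x)"
    and \<omega>: "\<omega> = (\<lambda>x. h x + d)"
    using assms(3) unfolding implied_bounds_def by blast
  define \<rho> where "\<rho> = t * \<mu> + (1 - t) * \<nu>"
  have "(\<lambda>x. (t * g x + (1 - t) * h x) + \<rho> * f x)
      = (\<lambda>x. t * (g x + \<mu> * f x) + (1 - t) * (h x + \<nu> * f x))"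
    unfolding \<rho>_def by (simp add: algebra_simps)
  then have "\<phi> (\<lambda>x. (t * g x + (1 - t) * h x) + \<rho> * f x)
      \<le> t * \<phi> (\<lambda>x. g x + \<mu> * f x) + (1 - t) * \<phi> (\<lambda>x. h x + \<nu> * f x)"
    using convex_combination_le[OF fr_dual_add[OF g(1) fr_dual_scale[OF f]]
        fr_dual_add[OF h(1) fr_dual_scale[OF f]] t] by simp
  moreover have "t * c \<le> t * (\<mu> * \<phi> f - \<phi> (\<lambda>x. g x + \<mu> * f x))"
    "(1 - t) * d \<le> (1 - t) * (\<nu> * \<phi> f - \<phi> (\<lambda>x. h x + \<nu> * f x))"
    using g(3) h(3) t by (simp_all add: mult_left_mono)
  ultimately have "t * c + (1 - t) * d \<le> \<rho> * \<phi> f - \<phi> (\<lambda>x. (t * g x + (1 - t) * h x) + \<rho> * f x)"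
    unfolding \<rho>_def by (simp add: algebra_simps)
  moreover have "0 \<le> \<rho>" unfolding \<rho>_def using g(2) h(2) t by simp
  moreover have "(\<lambda>x. t * g x + (1 - t) * h x) \<in> fr_dual p"
    by (intro fr_dual_add fr_dual_scale g(1) h(1))
  moreover have "(\<lambda>x. t * \<psi> x + (1 - t) * \<omega> x) = (\<lambda>x. (t * g x + (1 - t) * h x) + (t * c + (1 - t) * d))"
    unfolding \<psi> \<omega> by (simp add: algebra_simps)
  ultimately show ?thesis
    using implied_boundsI by simp
qed

lemma implied_bound_nonpositive_somewhere:
  assumes f: "f \<in> fr_dual p" and "\<psi> \<in> implied_bounds f"
  shows "\<exists>x\<in>K. \<psi> x \<le> 0"
proof -
  obtain g c \<mu> where g: "g \<in> fr_dual p" "0 \<le> \<mu>" "c \<le> \<mu> * \<phi> f - \<phi> (\<lambda>x. g x + \<mu> * f x)"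
    and \<psi>: "\<psi> = (\<lambda>x. g x + c)"
    using assms(2) unfolding implied_bounds_def by blast
  obtain x where x: "x \<in> K" "supp_fun (\<lambda>x. - g x) K = - g x"
    using supp_fun_attained[OF K_ck fr_dual_uminus[OF g(1)]] by blast
  have "\<mu> * \<phi> f = \<phi> (\<lambda>y. - g y + (g y + \<mu> * f y))"
    using homogeneous[OF f g(2)] by simp
  also have "\<dots> \<le> \<phi> (\<lambda>y. - g y) + \<phi> (\<lambda>y. g y + \<mu> * f y)"
    by (intro subadditive fr_dual_uminus fr_dual_add fr_dual_scale g(1) f)
  also have "\<dots> \<le> - g x + \<phi> (\<lambda>y. g y + \<mu> * f y)"
    using below_supp_fun[OF fr_dual_uminus[OF g(1)]] x(2) by simp
  finally have "\<psi> x \<le> 0" using g(3) unfolding \<psi> by simp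
  with x(1) show ?thesis by blast
qed

lemma at_zero: "\<phi> (\<lambda>x. 0) = 0"
  using homogeneous[OF fr_dual_zero, of 0] by simp

lemma exists_point_attaining:
  assumes f: "f \<in> fr_dual p"
  shows "\<exists>x\<in>K. (\<forall>g\<in>fr_dual p. g x \<le> \<phi> g) \<and> \<phi> f \<le> f x"
proof (rule ccontr)
  assume none: "\<not> ?thesis"
  define \<Phi> where "\<Phi> = insert (\<lambda>x. \<phi> f - f x) ((\<lambda>g x. g x - \<phi> g) ` fr_dual p)"
  have cover: "\<forall>x\<in>K. \<exists>\<psi>\<in>\<Phi>. 0 < \<psi> x"
    using none unfolding \<Phi>_def by force
  have \<Phi>_bounds: "\<Phi> \<subseteq> implied_bounds f"
  proof
    fix \<psi> assume "\<psi> \<in> \<Phi>"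
    then consider "\<psi> = (\<lambda>x. - f x + \<phi> f)" | g where "g \<in> fr_dual p" "\<psi> = (\<lambda>x. g x + - \<phi> g)"
      unfolding \<Phi>_def by fastforce
    then show "\<psi> \<in> implied_bounds f"
    proof cases
      case 1
      have "\<phi> f \<le> 1 * \<phi> f - \<phi> (\<lambda>x. - f x + 1 * f x)" using at_zero by simp
      then show ?thesis
        unfolding 1 by (rule implied_boundsI[OF fr_dual_uminus[OF f] zero_le_one])
    next
      case 2
      have "- \<phi> g \<le> 0 * \<phi> f - \<phi> (\<lambda>x. g x + 0 * f x)" by simp
      then show ?thesis
        unfolding 2 by (rule implied_boundsI[OF 2(1) order_refl])
    qed
  qed
  have continuous: "continuous_map (fr_top p) euclideanreal \<psi>" if \<psi>_in: "\<psi> \<in> \<Phi>" for \<psi>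
  proof -
    obtain g c where g: "continuous_map (fr_top p) euclideanreal g" and \<psi>: "\<psi> = (\<lambda>x. g x + c)"
      using implied_bounds_affine[OF subsetD[OF \<Phi>_bounds \<psi>_in]] by blast
    show ?thesis unfolding \<psi> by (rule continuous_map_add[OF g]) simp
  qed
  obtain S where S: "S \<subseteq> \<Phi>" "finite S" and S_cover: "\<forall>x\<in>K. \<exists>\<psi>\<in>S. 0 < \<psi> x"
    using compactin_finite_positive_subcover[OF K_compact continuous cover] by blast
  have "S \<noteq> {}" using S_cover ck_nonempty[OF K_ck] by auto
  moreover have "S \<subseteq> implied_bounds f" using S(1) \<Phi>_bounds by (rule order_trans)
  ultimately have "\<exists>\<psi>\<in>implied_bounds f. \<forall>x\<in>K. 0 < \<psi> x"
    using implied_bounds_affine implied_bounds_convex[OF f] S(2) K_compact K_convex S_cover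
    by (intro positive_member_of_convex_affine_family[where X = "fr_top p"])
  then obtain \<psi> where \<psi>: "\<psi> \<in> implied_bounds f" and pos: "\<forall>x\<in>K. 0 < \<psi> x" ..
  obtain x where "x \<in> K" "\<psi> x \<le> 0"
    using implied_bound_nonpositive_somewhere[OF f \<psi>] by blast
  with pos show False by force
qed

definition support_set :: "'a set" where
  "support_set = {x\<in>K. \<forall>g\<in>fr_dual p. g x \<le> \<phi> g}"

lemma support_set_ck: "support_set \<in> ck p"
proof -
  have "support_set \<noteq> {}"
    using exists_point_attaining[OF fr_dual_zero] unfolding support_set_def by blast
  moreover have "compactin (fr_top p) support_set"
  proof -
    have "support_set = K \<inter> (\<Inter>g\<in>fr_dual p. {x \<in> topspace (fr_top p). g x \<in> {..\<phi> g}})"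
      using compactin_subset_topspace[OF K_compact] fr_dual_zero unfolding support_set_def by auto
    moreover have "closedin (fr_top p) {x \<in> topspace (fr_top p). g x \<in> {..\<phi> g}}"
      if "g \<in> fr_dual p" for g
      using closedin_continuous_map_preimage[OF fr_dual_continuous[OF that], of "{..\<phi> g}"] by simp
    then have "closedin (fr_top p) (\<Inter>g\<in>fr_dual p. {x \<in> topspace (fr_top p). g x \<in> {..\<phi> g}})"
      using fr_dual_zero by (intro closedin_Inter) auto
    ultimately show ?thesis
      using compact_Int_closedin[OF K_compact] by simp
  qed
  moreover have "convex support_set"
  proof -
    have "support_set = (\<Inter>g\<in>fr_dual p. {x\<in>K. g x \<le> \<phi> g})"
      using fr_dual_zero unfolding support_set_def by auto
    then show ?thesis
      by (auto intro!: convex_INT convex_sublevel_linear K_convex fr_dual_linear)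
  qed
  ultimately show ?thesis unfolding ck_def by blast
qed

lemma supp_fun_support_set:
  assumes "f \<in> fr_dual p"
  shows "supp_fun f support_set = \<phi> f"
proof -
  obtain x where x: "x \<in> support_set" "\<phi> f \<le> f x"
    using exists_point_attaining[OF assms] unfolding support_set_def by blast
  have below: "\<forall>y\<in>support_set. f y \<le> \<phi> f" using assms unfolding support_set_def by blast
  then have "f x = \<phi> f" using x by (simp add: order_antisym)
  then show ?thesis
    unfolding supp_fun_def using x(1) below by (intro cSup_eq_maximum) force+
qed

end

lemma pettis_ckD:
  assumes "pettis_ck p \<Gamma>"
  shows "\<forall>t\<in>{0..1}. \<Gamma> t \<in> ck p"
    and "g \<in> fr_dual p \<Longrightarrow> set_integrable lebesgue {0..1} (\<lambda>t. supp_fun g (\<Gamma> t))"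
  using assms unfolding pettis_ck_def by auto

lemma set_integrable_supp_fun_of_subset:
  assumes "pettis_ck p \<Gamma>" "scalarly_measurable p G" "\<forall>t\<in>{0..1}. G t \<in> ck p \<and> G t \<subseteq> \<Gamma> t"
    and g: "g \<in> fr_dual p"
  shows "set_integrable lebesgue {0..1} (\<lambda>t. supp_fun g (G t))"
proof -
  note \<Gamma>_ck = pettis_ckD(1)[OF assms(1)] and \<Gamma>_int = pettis_ckD(2)[OF assms(1)]
  have "set_integrable lebesgue {0..1}
      (\<lambda>t. \<bar>supp_fun g (\<Gamma> t)\<bar> + \<bar>supp_fun (\<lambda>x. - g x) (\<Gamma> t)\<bar>)"
    by (intro set_integral_add(1) set_integrable_abs \<Gamma>_int g fr_dual_uminus)
  moreover have "set_borel_measurable lebesgue {0..1} (\<lambda>t. supp_fun g (G t))"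
    using assms(2) g unfolding scalarly_measurable_def set_borel_measurable_def
    by (subst (asm) borel_measurable_restrict_space_iff) auto
  moreover have "AE t in lebesgue. t \<in> {0..1} \<longrightarrow> norm (supp_fun g (G t))
      \<le> norm (\<bar>supp_fun g (\<Gamma> t)\<bar> + \<bar>supp_fun (\<lambda>x. - g x) (\<Gamma> t)\<bar>)"
  proof (intro AE_I2 impI)
    fix t :: real assume "t \<in> {0..1}"
    then have "G t \<in> ck p" "\<Gamma> t \<in> ck p" "G t \<subseteq> \<Gamma> t" using assms(3) \<Gamma>_ck by auto
    then show "norm (supp_fun g (G t))
        \<le> norm (\<bar>supp_fun g (\<Gamma> t)\<bar> + \<bar>supp_fun (\<lambda>x. - g x) (\<Gamma> t)\<bar>)"
      using supp_fun_mono[of "G t" p "\<Gamma> t" g] supp_fun_uminus_le[of "G t" p "\<Gamma> t" g] g by simp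
  qed
  ultimately show ?thesis by (rule set_integrable_bound)
qed

lemma dominated_sublinear_set_integral:
  assumes "pettis_ck p \<Gamma>" "\<forall>t\<in>{0..1}. G t \<in> ck p \<and> G t \<subseteq> \<Gamma> t"
    and G_int: "\<And>g. g \<in> fr_dual p \<Longrightarrow> set_integrable lebesgue {0..1} (\<lambda>t. supp_fun g (G t))"
    and E: "E \<in> sets lebesgue" "E \<subseteq> {0..1}"
    and K: "K \<in> ck p" "\<forall>g\<in>fr_dual p. supp_fun g K = (LINT t:E|lebesgue. supp_fun g (\<Gamma> t))"
  shows "dominated_sublinear p K (\<lambda>g. LINT t:E|lebesgue. supp_fun g (G t))"
proof
  have G_int_E: "set_integrable lebesgue E (\<lambda>t. supp_fun g (G t))" if "g \<in> fr_dual p" for g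
    using set_integrable_subset[OF G_int[OF that] E] .
  fix g h assume g: "g \<in> fr_dual p" and h: "h \<in> fr_dual p"
  have "(LINT t:E|lebesgue. supp_fun (\<lambda>x. g x + h x) (G t))
      \<le> (LINT t:E|lebesgue. supp_fun g (G t) + supp_fun h (G t))"
    using assms(2) E(2) g h
    by (intro set_integral_mono G_int_E fr_dual_add set_integral_add(1)) (auto intro: supp_fun_add_le)
  also have "\<dots> = (LINT t:E|lebesgue. supp_fun g (G t)) + (LINT t:E|lebesgue. supp_fun h (G t))"
    by (intro set_integral_add(2) G_int_E g h)
  finally show "(LINT t:E|lebesgue. supp_fun (\<lambda>x. g x + h x) (G t))
      \<le> (LINT t:E|lebesgue. supp_fun g (G t)) + (LINT t:E|lebesgue. supp_fun h (G t))" .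
next
  fix g and c :: real assume g: "g \<in> fr_dual p" and "0 \<le> c"
  have "(LINT t:E|lebesgue. supp_fun (\<lambda>x. c * g x) (G t)) = (LINT t:E|lebesgue. c * supp_fun g (G t))"
    using assms(2) E supp_fun_scale[OF _ g \<open>0 \<le> c\<close>] by (intro set_lebesgue_integral_cong) auto
  then show "(LINT t:E|lebesgue. supp_fun (\<lambda>x. c * g x) (G t)) = c * (LINT t:E|lebesgue. supp_fun g (G t))"
    by simp
next
  fix g assume g: "g \<in> fr_dual p"
  have "(LINT t:E|lebesgue. supp_fun g (G t)) \<le> (LINT t:E|lebesgue. supp_fun g (\<Gamma> t))"
    using assms(2) pettis_ckD(1)[OF assms(1)] E(2) supp_fun_mono g
    by (intro set_integral_mono set_integrable_subset[OF G_int[OF g] E]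
        set_integrable_subset[OF pettis_ckD(2)[OF assms(1) g] E]) blast
  then show "(LINT t:E|lebesgue. supp_fun g (G t)) \<le> supp_fun g K" using K(2) g by simp
qed (rule K(1))

theorem corollary4p7:
  fixes p :: "nat \<Rightarrow> 'a::real_vector \<Rightarrow> real"
    and \<Gamma> G :: "real \<Rightarrow> 'a set"
  assumes "frechet p"
    and "pettis_ck p \<Gamma>"
    and "\<forall>t\<in>{0..1}. G t \<in> ck p"
    and "scalarly_measurable p G"
    and "\<forall>t\<in>{0..1}. G t \<subseteq> \<Gamma> t"
  shows "pettis_ck p G"
proof -
  have G: "\<forall>t\<in>{0..1}. G t \<in> ck p \<and> G t \<subseteq> \<Gamma> t" using assms(3,5) by blast
  have G_int: "set_integrable lebesgue {0..1} (\<lambda>t. supp_fun g (G t))" if "g \<in> fr_dual p" for g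
    using set_integrable_supp_fun_of_subset[OF assms(2,4) G that] .
  have "\<exists>C\<in>ck p. \<forall>f\<in>fr_dual p. supp_fun f C = (LINT t:E|lebesgue. supp_fun f (G t))"
    if E: "E \<in> sets lebesgue" "E \<subseteq> {0..1}" for E
  proof -
    obtain K where K: "K \<in> ck p" "\<forall>f\<in>fr_dual p. supp_fun f K = (LINT t:E|lebesgue. supp_fun f (\<Gamma> t))"
      using assms(2) E unfolding pettis_ck_def by blast
    interpret dominated_sublinear p K "\<lambda>g. LINT t:E|lebesgue. supp_fun g (G t)"
      by (rule dominated_sublinear_set_integral[OF assms(2) G G_int E K])
    show ?thesis using support_set_ck supp_fun_support_set by blast
  qed
  then show ?thesis unfolding pettis_ck_def using assms(3) G_int by blast
qed

end
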